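(* Let $n\geq1$ and $p\leq -n$. There exists a positive constant $C_{n,p}$ depending only on $n,p$ such that for every $u\in\mathcal{B}$, $$\|u\|_{Lip(\mathbb{S}^n)}\leq C_{n,p}\quad\text{and}\quad u(x)\geq C_{n,p}^{-1}\ \ \forall x\in\mathbb{S}^n,$$ where $\mathcal{B}=\{u\in H^*_+(\mathbb{S}^n):\ u \text{ is } (n+2)\text{-symmetric},\ \int_{\mathbb{S}^n}u^p\,d\sigma=|\mathbb{S}^n|\}$.
   Context: Fix $n+2$ points $q_1,\dots,q_{n+2}\in\mathbb{S}^n\subset\mathbb{R}^{n+1}$ spread evenly on $\mathbb{S}^n$, i.e. the vertices of a regular simplex inscribed in $\mathbb{S}^n$. Let $\mathcal{S}_{n+2}(q)$ be the set of rotations $\phi\in SO(n+1)$ mapping $\{q_1,\dots,q_{n+2}\}$ onto itself. A function $u$ is $(n+2)$-symmetric if $u\circ\phi=u$ for all $\phi\in\mathcal{S}_{n+2}(q)$. $H^*_+(\mathbb{S}^n)$ is the set of support functions $u$ of convex bodies $\Omega_u\subset\mathbb{R}^{n+1}$ with $u>0$ on $\mathbb{S}^n$ and $|\Omega_u|<\infty$. $d\sigma$ is the surface measure on $\mathbb{S}^n$. *)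

theory Defs
  imports "HOL-Analysis.Analysis"
begin

text \<open>Ambient space R^(n+1) is real^'n with CARD('n) = n+1; the sphere S^n is sphere 0 1.\<close>

definition regular_simplex_vertices :: "(real^'n) set \<Rightarrow> bool" where
  "regular_simplex_vertices Q \<longleftrightarrow> finite Q \<and> card Q = CARD('n) + 1 \<and>
     (\<forall>q\<in>Q. norm q = 1) \<and>
     (\<forall>q\<in>Q. \<forall>q'\<in>Q. q \<noteq> q' \<longrightarrow> q \<bullet> q' = - 1 / real CARD('n))"

definition simplex_rotations :: "(real^'n) set \<Rightarrow> (real^'n^'n) set" where
  "simplex_rotations Q = {A. rotation_matrix A \<and> (\<lambda>x. A *v x) ` Q = Q}"

definition symmetric_wrt :: "(real^'n) set \<Rightarrow> (real^'n \<Rightarrow> real) \<Rightarrow> bool" where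
  "symmetric_wrt Q u \<longleftrightarrow> (\<forall>A\<in>simplex_rotations Q. \<forall>x\<in>sphere 0 1. u (A *v x) = u x)"

definition support_fun :: "(real^'n) set \<Rightarrow> real^'n \<Rightarrow> real" where
  "support_fun K x = (SUP y\<in>K. x \<bullet> y)"

definition Hstar_plus :: "(real^'n \<Rightarrow> real) set" where
  "Hstar_plus = {u. \<exists>K. convex K \<and> compact K \<and> interior K \<noteq> {} \<and>
       emeasure lebesgue K < \<infinity> \<and>
       (\<forall>x\<in>sphere 0 1. u x = support_fun K x \<and> u x > 0)}"

text \<open>Integral over S^n w.r.t. the surface measure, via the cone formula
  int_{S^n} f d sigma = (n+1) * int_{B^{n+1}} f(x/|x|) dx.\<close>
definition sphere_integral :: "(real^'n \<Rightarrow> real) \<Rightarrow> real" where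
  "sphere_integral f = real CARD('n) * integral (ball 0 1) (\<lambda>x. f (x /\<^sub>R norm x))"

definition sphere_area :: "'n::finite itself \<Rightarrow> real" where
  "sphere_area _ = sphere_integral (\<lambda>x::real^'n. 1)"

definition lip_norm :: "(real^'n \<Rightarrow> real) \<Rightarrow> ereal" where
  "lip_norm u = (SUP x\<in>sphere 0 1. ereal \<bar>u x\<bar>) +
     (SUP xy\<in>{(x,y). x \<in> sphere 0 1 \<and> y \<in> sphere 0 1 \<and> x \<noteq> y}.
        ereal (\<bar>u (fst xy) - u (snd xy)\<bar> / dist (fst xy) (snd xy)))"

definition class_B :: "(real^'n) set \<Rightarrow> real \<Rightarrow> (real^'n \<Rightarrow> real) set" where
  "class_B Q p = {u. u \<in> Hstar_plus \<and> symmetric_wrt Q u \<and>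
      sphere_integral (\<lambda>x. u x powr p) = sphere_area TYPE('n)}"

end

theory Submission
  imports Defs
begin

text \<open>The rotations of SO(n+1) permuting the vertices are the linear extensions of the
  permutations of the vertices with determinant 1. Maximising \<open>\<Sum>q. (x \<bullet> q) (\<pi> q \<bullet> y)\<close> over
  permutations \<open>\<pi>\<close> and correcting the parity by a transposition shows that for \<open>x, y \<noteq> 0\<close> some
  such rotation \<open>A\<close> has \<open>A x \<bullet> y > 0\<close>; by compactness \<open>\<Sum>A. max 0 (A x \<bullet> y) \<ge> c \<bar>y\<bar>\<close>
  for unit \<open>x\<close>. Since \<open>p < 0\<close>, the normalisation forces \<open>u x0 \<le> 1\<close> at some point, and symmetry
  then bounds \<open>c \<bar>y\<bar>\<close> by the number of rotations for every point \<open>y\<close> of the body: \<open>u\<close> is uniformly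
  bounded and Lipschitz. If \<open>u \<theta>\<close> were tiny, the Lipschitz bound would make \<open>u powr p\<close>,
  \<open>p \<le> -n\<close>, large on thin cones around \<open>\<theta>\<close> at many dyadic scales, each scale contributing a
  fixed amount to the integral, which would then exceed \<open>\<bar>S^n\<bar>\<close>.\<close>

section \<open>Regular simplices\<close>

lemma regular_simplexD:
  fixes Q :: "(real^'n) set"
  assumes "regular_simplex_vertices Q"
  shows "finite Q" "card Q = CARD('n) + 1"
    "\<And>q. q \<in> Q \<Longrightarrow> q \<bullet> q = 1"
    "\<And>q q'. q \<in> Q \<Longrightarrow> q' \<in> Q \<Longrightarrow> q \<noteq> q' \<Longrightarrow> q \<bullet> q' = - 1 / real CARD('n)"
  using assms unfolding regular_simplex_vertices_def by (auto simp: norm_eq_1)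

lemma regular_simplex_sum_eq_0:
  fixes Q :: "(real^'n) set"
  assumes Q: "regular_simplex_vertices Q"
  shows "(\<Sum>q\<in>Q. q) = 0"
proof -
  note B = regular_simplexD[OF Q]
  have "q \<bullet> (\<Sum>r\<in>Q. r) = 0" if q: "q \<in> Q" for q
  proof -
    have "q \<bullet> (\<Sum>r\<in>Q. r) = q \<bullet> q + (\<Sum>r\<in>Q - {q}. q \<bullet> r)"
      unfolding inner_sum_right using B(1) q by (simp add: sum.remove)
    also have "(\<Sum>r\<in>Q - {q}. q \<bullet> r) = (\<Sum>r\<in>Q - {q}. - 1 / real CARD('n))"
      using B(4) q by (intro sum.cong) auto
    finally show ?thesis
      using B q by (simp add: card_Diff_singleton)
  qed
  then have "(\<Sum>r\<in>Q. r) \<bullet> (\<Sum>r\<in>Q. r) = 0"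
    by (simp add: inner_sum_left)
  then show ?thesis by simp
qed

lemma regular_simplex_independent_Diff:
  fixes Q :: "(real^'n) set"
  assumes Q: "regular_simplex_vertices Q" and q0: "q0 \<in> Q"
  shows "independent (Q - {q0})"
  unfolding independent_explicit
proof (intro conjI allI impI ballI)
  note B = regular_simplexD[OF Q]
  let ?Q' = "Q - {q0}" and ?N = "real CARD('n)"
  show fQ': "finite ?Q'" using B(1) by simp
  fix c v assume h: "(\<Sum>v\<in>?Q'. c v *\<^sub>R v) = 0" and v: "v \<in> ?Q'"
  define C where "C = (\<Sum>v\<in>?Q'. c v)"
  \<comment> \<open>testing the relation against each s gives c s - (C - c s) / N = 0\<close>
  have cs: "c s = C / (?N + 1)" if s: "s \<in> ?Q'" for s
  proof -
    have "0 = s \<bullet> (\<Sum>v\<in>?Q'. c v *\<^sub>R v)" using h by simp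
    also have "\<dots> = c s * (s \<bullet> s) + (\<Sum>v\<in>?Q' - {s}. c v * (s \<bullet> v))"
      unfolding inner_sum_right using fQ' s by (simp add: sum.remove)
    also have "(\<Sum>v\<in>?Q' - {s}. c v * (s \<bullet> v)) = (\<Sum>v\<in>?Q' - {s}. c v) * (- 1 / ?N)"
      unfolding sum_distrib_right using B(4) s by (intro sum.cong) auto
    also have "(\<Sum>v\<in>?Q' - {s}. c v) = C - c s"
      using fQ' s by (simp add: C_def sum.remove)
    finally show ?thesis
      using B(3) s by (simp add: field_simps)
  qed
  have "(\<Sum>v\<in>?Q'. c v) = (\<Sum>v\<in>?Q'. C / (?N + 1))"
    by (rule sum.cong) (simp_all add: cs)
  then have "C = ?N * (C / (?N + 1))"
    using B(1,2) q0 by (simp add: C_def[symmetric] card_Diff_singleton)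
  then have "C = 0" by (simp add: field_simps)
  then show "c v = 0" using cs[OF v] by simp
qed

lemma regular_simplex_span:
  fixes Q :: "(real^'n) set"
  assumes Q: "regular_simplex_vertices Q"
  shows "span Q = UNIV"
proof -
  note B = regular_simplexD[OF Q]
  obtain q0 where q0: "q0 \<in> Q" using B(2) by fastforce
  have "card (Q - {q0}) = CARD('n)"
    using B(1,2) q0 by (simp add: card_Diff_singleton)
  then have "UNIV \<subseteq> span (Q - {q0})"
    by (intro card_ge_dim_independent regular_simplex_independent_Diff[OF Q q0]) auto
  then show ?thesis
    using span_mono[of "Q - {q0}" Q] by auto
qed

lemma regular_simplex_orthogonal_eq_0:
  fixes Q :: "(real^'n) set"
  assumes Q: "regular_simplex_vertices Q" and x: "\<And>q. q \<in> Q \<Longrightarrow> x \<bullet> q = 0"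
  shows "x = 0"
  using orthogonal_to_span[of x Q x] regular_simplex_span[OF Q] x
  by (simp add: orthogonal_def)

lemma regular_simplex_frame:
  fixes Q :: "(real^'n) set"
  assumes Q: "regular_simplex_vertices Q"
  shows "(\<Sum>q\<in>Q. (x \<bullet> q) *\<^sub>R q) = ((real CARD('n) + 1) / real CARD('n)) *\<^sub>R x"
proof -
  note B = regular_simplexD[OF Q]
  let ?k = "(real CARD('n) + 1) / real CARD('n)"
  have "(\<Sum>q\<in>Q. (x \<bullet> q) *\<^sub>R q) - ?k *\<^sub>R x = 0"
  proof (rule regular_simplex_orthogonal_eq_0[OF Q])
    fix s assume s: "s \<in> Q"
    have "(\<Sum>q\<in>Q. (x \<bullet> q) * (q \<bullet> s)) = x \<bullet> s + (\<Sum>q\<in>Q - {s}. (x \<bullet> q)) * (- 1 / real CARD('n))"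
      unfolding sum_distrib_right using B s by (simp add: sum.remove inner_commute)
    also have "(\<Sum>q\<in>Q - {s}. x \<bullet> q) = x \<bullet> (\<Sum>q\<in>Q. q) - x \<bullet> s"
      unfolding inner_sum_right using B(1) s by (simp add: sum.remove)
    finally show "((\<Sum>q\<in>Q. (x \<bullet> q) *\<^sub>R q) - ?k *\<^sub>R x) \<bullet> s = 0"
      by (simp add: inner_diff_left inner_sum_left regular_simplex_sum_eq_0[OF Q] field_simps)
  qed
  then show ?thesis by simp
qed

lemma linear_eq_on_regular_simplex:
  fixes Q :: "(real^'n) set"
  assumes Q: "regular_simplex_vertices Q" and "linear f" "linear g"
    and eq: "\<And>q. q \<in> Q \<Longrightarrow> f q = g q"
  shows "f x = g x"
  using linear_eq_on_span[OF assms(2,3) eq] regular_simplex_span[OF Q] by simp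

section \<open>Rotations of the simplex\<close>

lemma linear_reflection: "linear (\<lambda>z::'a::real_inner. z - (2 * (z \<bullet> d) / (d \<bullet> d)) *\<^sub>R d)"
  by (rule linearI) (simp_all add: inner_add_left algebra_simps scaleR_add_left add_divide_distrib)

lemma det_matrix_reflection:
  fixes d :: "real^'n"
  assumes "d \<noteq> 0"
  shows "det (matrix (\<lambda>z. z - (2 * (z \<bullet> d) / (d \<bullet> d)) *\<^sub>R d)) = -1"
proof -
  define refl where "refl d z = z - (2 * (z \<bullet> d) / (d \<bullet> d)) *\<^sub>R d" for d z :: "real^'n"
  have lin: "linear (refl d)" for d
    unfolding refl_def by (rule linear_reflection)
  obtain i :: 'n where True by blast
  let ?b = "axis i (1::real) :: real^'n"
  have "det (matrix (refl ?b)) = (\<Prod>k\<in>UNIV. if k = i then -1 else 1)"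
  proof -
    have M: "matrix (refl ?b) $ k $ l = (if k = l then if k = i then -1 else 1 else 0)" for k l
      unfolding matrix_def refl_def by (simp add: inner_axis) (auto simp: axis_def)
    show ?thesis by (subst det_diagonal) (simp_all add: M)
  qed
  also have "\<dots> = -1" by (simp add: prod.If_cases)
  finally have det_b: "det (matrix (refl ?b)) = -1" .
  obtain T where T: "orthogonal_transformation T" "T ?b = d /\<^sub>R norm d"
    using orthogonal_transformation_exists_1[of ?b "d /\<^sub>R norm d"] assms by auto
  have lT: "linear T" using T(1) by (rule orthogonal_transformation_linear)
  have d: "d = norm d *\<^sub>R T ?b" using T(2) assms by simp
  have "refl d (T z) = T (refl ?b z)" for z
  proof -
    have "T z \<bullet> d = norm d * (z \<bullet> ?b)"
      using T(1) by (subst d) (simp add: orthogonal_transformation_def)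
    moreover have "d \<bullet> d = norm d * norm d" by (simp add: dot_square_norm power2_eq_square)
    ultimately have "(2 * (T z \<bullet> d) / (d \<bullet> d)) *\<^sub>R d = (2 * (z \<bullet> ?b)) *\<^sub>R T ?b"
      using assms by (subst (3) d) simp
    then show ?thesis
      by (simp add: refl_def linear_diff[OF lT] linear_scale[OF lT])
  qed
  then have conj: "refl d \<circ> T = T \<circ> refl ?b" by auto
  have "det (matrix (refl d)) * det (matrix T) = det (matrix T) * det (matrix (refl ?b))"
    by (metis conj det_mul matrix_compose lin lT mult.commute)
  then have "(det (matrix (refl d)) + 1) * det (matrix T) = 0"
    using det_b by (simp add: distrib_right)
  then have "det (matrix (refl d)) = -1"
    using orthogonal_transformation_det[OF T(1)] by auto
  then show ?thesis by (simp add: refl_def[abs_def])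
qed

text \<open>The linear map sending each vertex \<open>q\<close> to \<open>\<pi> q\<close>: it is \<open>\<pi>\<close> applied to the expansion
  \<open>z = N / (N + 1) \<Sum>q\<in>Q. (z \<bullet> q) q\<close> of \<open>regular_simplex_frame\<close>, with \<open>N = CARD('n)\<close>.\<close>
definition simplex_perm_map :: "(real^'n) set \<Rightarrow> (real^'n \<Rightarrow> real^'n) \<Rightarrow> real^'n \<Rightarrow> real^'n" where
  "simplex_perm_map Q \<pi> z = (real CARD('n) / (real CARD('n) + 1)) *\<^sub>R (\<Sum>r\<in>Q. (z \<bullet> r) *\<^sub>R \<pi> r)"

lemma linear_simplex_perm_map: "linear (simplex_perm_map Q \<pi>)"
proof (rule linearI)
  show "simplex_perm_map Q \<pi> (x + y) = simplex_perm_map Q \<pi> x + simplex_perm_map Q \<pi> y" for x y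
    unfolding simplex_perm_map_def
    by (simp add: inner_add_left scaleR_add_left sum.distrib scaleR_add_right)
  show "simplex_perm_map Q \<pi> (c *\<^sub>R x) = c *\<^sub>R simplex_perm_map Q \<pi> x" for c x
    unfolding simplex_perm_map_def by (simp add: scaleR_sum_right mult_ac)
qed

lemma inner_simplex_perm_map:
  "simplex_perm_map Q \<pi> x \<bullet> y = (real CARD('n) / (real CARD('n) + 1)) * (\<Sum>r\<in>Q. (x \<bullet> r) * (\<pi> r \<bullet> y))"
  for Q :: "(real^'n) set"
  unfolding simplex_perm_map_def by (simp add: inner_sum_left)

lemma permutes_regular_simplex_inner:
  fixes Q :: "(real^'n) set"
  assumes Q: "regular_simplex_vertices Q" and \<pi>: "\<pi> permutes Q" and "r \<in> Q" "s \<in> Q"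
  shows "\<pi> r \<bullet> \<pi> s = r \<bullet> s"
proof (cases "r = s")
  case False
  then have "\<pi> r \<noteq> \<pi> s" using permutes_inj[OF \<pi>] by (auto dest: injD)
  then show ?thesis
    using regular_simplexD(4)[OF Q] assms False permutes_in_image[OF \<pi>] by simp
qed (use regular_simplexD(3)[OF Q] assms permutes_in_image[OF \<pi>] in simp)

lemma simplex_perm_map_inner_vertex:
  fixes Q :: "(real^'n) set"
  assumes Q: "regular_simplex_vertices Q" and \<pi>: "\<pi> permutes Q" and s: "s \<in> Q"
  shows "simplex_perm_map Q \<pi> x \<bullet> \<pi> s = x \<bullet> s"
proof -
  have "simplex_perm_map Q \<pi> x \<bullet> \<pi> s
      = (real CARD('n) / (real CARD('n) + 1)) * ((\<Sum>r\<in>Q. (x \<bullet> r) *\<^sub>R r) \<bullet> s)"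
    unfolding inner_simplex_perm_map inner_sum_left inner_scaleR_left
    using permutes_regular_simplex_inner[OF Q \<pi> _ s] by simp
  then show ?thesis by (simp add: regular_simplex_frame[OF Q])
qed

lemma simplex_perm_map_vertex:
  fixes Q :: "(real^'n) set"
  assumes Q: "regular_simplex_vertices Q" and \<pi>: "\<pi> permutes Q" and q: "q \<in> Q"
  shows "simplex_perm_map Q \<pi> q = \<pi> q"
proof -
  have "(simplex_perm_map Q \<pi> q - \<pi> q) \<bullet> \<pi> s = 0" if "s \<in> Q" for s
    using simplex_perm_map_inner_vertex[OF Q \<pi> that, of q]
      permutes_regular_simplex_inner[OF Q \<pi> q that] by (simp add: inner_diff_left)
  moreover have "\<exists>t\<in>Q. s = \<pi> t" if "s \<in> Q" for s
    using that permutes_image[OF \<pi>] by (metis imageE)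
  ultimately have "(simplex_perm_map Q \<pi> q - \<pi> q) \<bullet> s = 0" if "s \<in> Q" for s
    using that by metis
  then show ?thesis using regular_simplex_orthogonal_eq_0[OF Q] by fastforce
qed

lemma orthogonal_transformation_simplex_perm_map:
  fixes Q :: "(real^'n) set"
  assumes Q: "regular_simplex_vertices Q" and \<pi>: "\<pi> permutes Q"
  shows "orthogonal_transformation (simplex_perm_map Q \<pi>)"
  unfolding orthogonal_transformation_def
proof (intro conjI allI linear_simplex_perm_map)
  fix x y
  have "\<pi> r \<bullet> simplex_perm_map Q \<pi> y = r \<bullet> y" if "r \<in> Q" for r
    using simplex_perm_map_inner_vertex[OF Q \<pi> that, of y] by (simp only: inner_commute)
  then have "simplex_perm_map Q \<pi> x \<bullet> simplex_perm_map Q \<pi> y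
      = (real CARD('n) / (real CARD('n) + 1)) * ((\<Sum>r\<in>Q. (x \<bullet> r) *\<^sub>R r) \<bullet> y)"
    unfolding inner_simplex_perm_map[of Q \<pi> x] inner_sum_left inner_scaleR_left by simp
  then show "simplex_perm_map Q \<pi> x \<bullet> simplex_perm_map Q \<pi> y = x \<bullet> y"
    by (simp add: regular_simplex_frame[OF Q])
qed

lemma simplex_perm_map_comp:
  fixes Q :: "(real^'n) set"
  assumes Q: "regular_simplex_vertices Q" and \<pi>: "\<pi> permutes Q" and \<sigma>: "\<sigma> permutes Q"
  shows "simplex_perm_map Q (\<pi> \<circ> \<sigma>) = simplex_perm_map Q \<pi> \<circ> simplex_perm_map Q \<sigma>"
proof
  fix z
  show "simplex_perm_map Q (\<pi> \<circ> \<sigma>) z = (simplex_perm_map Q \<pi> \<circ> simplex_perm_map Q \<sigma>) z"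
  proof (rule linear_eq_on_regular_simplex[OF Q linear_simplex_perm_map])
    show "linear (simplex_perm_map Q \<pi> \<circ> simplex_perm_map Q \<sigma>)"
      by (intro linear_compose linear_simplex_perm_map)
    fix q assume "q \<in> Q"
    then show "simplex_perm_map Q (\<pi> \<circ> \<sigma>) q = (simplex_perm_map Q \<pi> \<circ> simplex_perm_map Q \<sigma>) q"
      using simplex_perm_map_vertex[OF Q permutes_compose[OF \<sigma> \<pi>]] simplex_perm_map_vertex[OF Q \<sigma>]
        simplex_perm_map_vertex[OF Q \<pi>] permutes_in_image[OF \<sigma>] by simp
  qed
qed

lemma simplex_perm_map_transpose:
  fixes Q :: "(real^'n) set"
  assumes Q: "regular_simplex_vertices Q" and r: "r \<in> Q" and s: "s \<in> Q" and rs: "r \<noteq> s"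
  shows "simplex_perm_map Q (Transposition.transpose r s) z
    = z - (2 * (z \<bullet> (r - s)) / ((r - s) \<bullet> (r - s))) *\<^sub>R (r - s)"
proof (rule linear_eq_on_regular_simplex[OF Q linear_simplex_perm_map])
  note B = regular_simplexD[OF Q]
  show "linear (\<lambda>z. z - (2 * (z \<bullet> (r - s)) / ((r - s) \<bullet> (r - s))) *\<^sub>R (r - s))"
    by (rule linear_reflection)
  fix q assume q: "q \<in> Q"
  define c where "c = 1 + 1 / real CARD('n)"
  have "c > 0" unfolding c_def by (intro add_pos_nonneg) auto
  have "(r - s) \<bullet> (r - s) = 2 * c"
    using B(3)[OF r] B(3)[OF s] B(4)[OF r s rs]
    by (simp add: c_def inner_diff_left inner_diff_right inner_commute)
  moreover have "q \<bullet> (r - s) = (if q = r then c else if q = s then - c else 0)"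
    using B(3)[OF q] B(4)[OF q r] B(4)[OF q s] B(4)[OF r s rs] B(4)[OF s r] rs
    by (auto simp: c_def inner_diff_right)
  ultimately have "2 * (q \<bullet> (r - s)) / ((r - s) \<bullet> (r - s)) = (if q = r then 1 else if q = s then -1 else 0)"
    using \<open>c > 0\<close> by auto
  then have "Transposition.transpose r s q = q - (2 * (q \<bullet> (r - s)) / ((r - s) \<bullet> (r - s))) *\<^sub>R (r - s)"
    using rs by (auto simp: Transposition.transpose_def)
  then show "simplex_perm_map Q (Transposition.transpose r s) q
      = q - (2 * (q \<bullet> (r - s)) / ((r - s) \<bullet> (r - s))) *\<^sub>R (r - s)"
    using simplex_perm_map_vertex[OF Q permutes_swap_id[OF r s] q] by simp
qed

lemma det_simplex_perm_map_transpose: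
  fixes Q :: "(real^'n) set"
  assumes Q: "regular_simplex_vertices Q" and "r \<in> Q" "s \<in> Q" "r \<noteq> s"
  shows "det (matrix (simplex_perm_map Q (Transposition.transpose r s))) = -1"
proof -
  have "simplex_perm_map Q (Transposition.transpose r s)
      = (\<lambda>z. z - (2 * (z \<bullet> (r - s)) / ((r - s) \<bullet> (r - s))) *\<^sub>R (r - s))"
    using simplex_perm_map_transpose[OF assms] by blast
  then show ?thesis using det_matrix_reflection[of "r - s"] assms(4) by simp
qed

lemma matrix_simplex_perm_map_in_simplex_rotations:
  fixes Q :: "(real^'n) set"
  assumes Q: "regular_simplex_vertices Q" and \<pi>: "\<pi> permutes Q"
    and det: "det (matrix (simplex_perm_map Q \<pi>)) = 1"
  shows "matrix (simplex_perm_map Q \<pi>) \<in> simplex_rotations Q"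
proof -
  let ?A = "matrix (simplex_perm_map Q \<pi>)"
  have "orthogonal_matrix ?A"
    using orthogonal_transformation_simplex_perm_map[OF Q \<pi>]
    by (simp add: orthogonal_transformation_matrix)
  moreover have "(\<lambda>x. ?A *v x) ` Q = Q"
    using simplex_perm_map_vertex[OF Q \<pi>] permutes_image[OF \<pi>]
    by (simp add: linear_simplex_perm_map cong: image_cong)
  ultimately show ?thesis
    using det by (simp add: simplex_rotations_def rotation_matrix_def)
qed

lemma finite_simplex_rotations:
  fixes Q :: "(real^'n) set"
  assumes Q: "regular_simplex_vertices Q"
  shows "finite (simplex_rotations Q)"
proof (rule finite_subset)
  show "finite ((\<lambda>\<pi>. matrix (simplex_perm_map Q \<pi>)) ` {\<pi>. \<pi> permutes Q})"
    using finite_permutations[OF regular_simplexD(1)[OF Q]] by simp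
  show "simplex_rotations Q \<subseteq> (\<lambda>\<pi>. matrix (simplex_perm_map Q \<pi>)) ` {\<pi>. \<pi> permutes Q}"
  proof
    fix A assume A: "A \<in> simplex_rotations Q"
    then have AQ: "(\<lambda>x. A *v x) ` Q = Q" and "orthogonal_matrix A"
      by (auto simp: simplex_rotations_def rotation_matrix_def)
    then have "inj (\<lambda>x. A *v x)"
      by (simp add: orthogonal_transformation_inj orthogonal_transformation_matrix)
    define \<pi> where "\<pi> x = (if x \<in> Q then A *v x else x)" for x
    have "bij_betw \<pi> Q Q"
      unfolding bij_betw_def \<pi>_def using AQ \<open>inj _\<close>
      by (auto simp: inj_on_def cong: image_cong)
    then have \<pi>: "\<pi> permutes Q" by (rule bij_imp_permutes) (simp add: \<pi>_def)
    have "simplex_perm_map Q \<pi> = (\<lambda>z. A *v z)"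
    proof (rule ext, rule linear_eq_on_regular_simplex[OF Q linear_simplex_perm_map])
      fix q assume "q \<in> Q"
      then show "simplex_perm_map Q \<pi> q = A *v q"
        using simplex_perm_map_vertex[OF Q \<pi>] by (simp add: \<pi>_def)
    qed simp
    then have "A = matrix (simplex_perm_map Q \<pi>)" by simp
    with \<pi> show "A \<in> (\<lambda>\<pi>. matrix (simplex_perm_map Q \<pi>)) ` {\<pi>. \<pi> permutes Q}" by blast
  qed
qed

section \<open>Rearranging products over a finite set\<close>

lemma sum_eq_0_imp_nonconstant:
  fixes f :: "'a \<Rightarrow> real"
  assumes "finite Q" "sum f Q = 0" "r \<in> Q" "f r \<noteq> 0"
  shows "\<exists>s\<in>Q. f s \<noteq> f r"
proof (rule ccontr)
  assume "\<not> ?thesis"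
  then have "sum f Q = real (card Q) * f r" by simp
  then show False using assms card_0_eq[of Q] by auto
qed

lemma exists_pair_product_ne_0:
  fixes a g :: "'a \<Rightarrow> real"
  assumes a: "k \<in> Q" "k' \<in> Q" "a k \<noteq> a k'" and g: "r \<in> Q" "s \<in> Q" "g r \<noteq> g s"
  shows "\<exists>r\<in>Q. \<exists>s\<in>Q. (a r - a s) * (g r - g s) \<noteq> 0"
proof (cases "a r = a s")
  case True
  obtain t where t: "t \<in> Q" "a t \<noteq> a r"
    using a by (cases "a k = a r") auto
  consider "g t \<noteq> g r" | "g t \<noteq> g s" using g(3) by metis
  then show ?thesis
  proof cases
    case 1
    then have "(a t - a r) * (g t - g r) \<noteq> 0" using t by simp
    then show ?thesis using t g by blast
  next
    case 2
    then have "(a t - a s) * (g t - g s) \<noteq> 0" using t True by simp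
    then show ?thesis using t g by blast
  qed
next
  case False
  then have "(a r - a s) * (g r - g s) \<noteq> 0" using g by simp
  then show ?thesis using g by blast
qed

lemma sum_mult_transpose:
  fixes a g :: "'a \<Rightarrow> real"
  assumes "finite Q" "r \<in> Q" "s \<in> Q" "r \<noteq> s"
  shows "(\<Sum>t\<in>Q. a t * g (Transposition.transpose r s t))
    = (\<Sum>t\<in>Q. a t * g t) - (a r - a s) * (g r - g s)"
proof -
  let ?h = "\<lambda>t. a t * g (Transposition.transpose r s t) - a t * g t"
  have "(\<Sum>t\<in>Q. ?h t) = (\<Sum>t\<in>{r, s}. ?h t)"
    using assms by (intro sum.mono_neutral_right) (auto simp: Transposition.transpose_def)
  also have "\<dots> = - (a r - a s) * (g r - g s)"
    using assms(4) by (simp add: algebra_simps)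
  finally show ?thesis by (simp add: sum_subtractf algebra_simps)
qed

lemma sum_sum_pair_products:
  fixes a g :: "'a \<Rightarrow> real"
  shows "(\<Sum>r\<in>Q. \<Sum>s\<in>Q. (a r - a s) * (g r - g s))
    = 2 * real (card Q) * (\<Sum>r\<in>Q. a r * g r) - 2 * (\<Sum>r\<in>Q. a r) * (\<Sum>r\<in>Q. g r)"
proof -
  have "(a r - a s) * (g r - g s) = a r * g r + a s * g s - a r * g s - a s * g r" for r s
    by (simp add: algebra_simps)
  moreover have "(\<Sum>r\<in>Q. \<Sum>s\<in>Q. a s * g r) = (\<Sum>r\<in>Q. a r) * (\<Sum>r\<in>Q. g r)"
    by (subst sum.swap) (simp add: sum_product mult.commute)
  ultimately show ?thesis
    by (simp add: sum_subtractf sum.distrib sum_product sum_distrib_left[symmetric] mult.commute)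
qed

lemma product_sum_eq_products_imp_0:
  fixes d1 d2 e1 e2 V :: real
  assumes "d1 * e1 = V" "d2 * e2 = V" "(d1 + d2) * (e1 + e2) = V"
  shows "V = 0"
proof (rule ccontr)
  assume "V \<noteq> 0"
  have "(d1 + d2) * (e1 + e2) = d1 * e1 + d2 * e2 + (d1 * e2 + d2 * e1)"
    by (simp add: algebra_simps)
  then have h: "d1 * e2 + d2 * e1 = - V" using assms by linarith
  have "d1 * d2 * (d1 * e2 + d2 * e1) = d1 * d1 * (d2 * e2) + d2 * d2 * (d1 * e1)"
    by (simp add: algebra_simps)
  then have "V * (d1 * d1 + d1 * d2 + d2 * d2) = 0"
    using h assms(1,2) by (simp add: algebra_simps)
  then have "d1 * d1 + d1 * d2 + d2 * d2 = 0" using \<open>V \<noteq> 0\<close> by simp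
  moreover have "(2 * d1 + d2)\<^sup>2 + 3 * d2\<^sup>2 = 4 * (d1 * d1 + d1 * d2 + d2 * d2)"
    by (simp add: power2_eq_square algebra_simps)
  ultimately have "(2 * d1 + d2)\<^sup>2 + 3 * d2\<^sup>2 = 0" by simp
  then have "d2 = 0" by (smt (verit) zero_le_power2 power2_eq_square mult_eq_0_iff)
  then show False using assms(2) \<open>V \<noteq> 0\<close> by simp
qed

lemma exists_pair_product_lt:
  fixes a g :: "'a \<Rightarrow> real"
  assumes fin: "finite Q" and card: "card Q \<ge> 3" and V: "V > 0"
    and total: "(\<Sum>r\<in>Q. \<Sum>s\<in>Q. (a r - a s) * (g r - g s)) = 2 * real (card Q) * V"
  shows "\<exists>r\<in>Q. \<exists>s\<in>Q. r \<noteq> s \<and> (a r - a s) * (g r - g s) < V"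
proof (rule ccontr)
  define P where "P r s = (a r - a s) * (g r - g s)" for r s
  assume "\<not> ?thesis"
  then have ge: "P r s \<ge> V" if "r \<in> Q" "s \<in> Q" "r \<noteq> s" for r s
    using that by (auto simp: P_def not_less)
  have "(\<Sum>r\<in>Q. \<Sum>s\<in>Q - {r}. P r s - V) = (\<Sum>r\<in>Q. \<Sum>s\<in>Q. P r s) - real (card Q) * (real (card Q) - 1) * V"
    using fin card by (simp add: sum_subtractf sum.remove[of Q] P_def card_Diff_singleton of_nat_diff
        sum_distrib_right[symmetric] card_gt_0_iff sum.distrib)
  also have "\<dots> = real (card Q) * (3 - real (card Q)) * V"
    using total by (simp add: P_def algebra_simps)
  also have "\<dots> \<le> 0"
    using card V by (intro mult_nonpos_nonneg mult_nonneg_nonpos) auto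
  finally have sum_le: "(\<Sum>r\<in>Q. \<Sum>s\<in>Q - {r}. P r s - V) \<le> 0" .
  have eq: "P r s = V" if rs: "r \<in> Q" "s \<in> Q" "r \<noteq> s" for r s
  proof -
    have nonneg: "0 \<le> (\<Sum>s\<in>Q - {r'}. P r' s - V)" if "r' \<in> Q" for r'
      using ge that by (intro sum_nonneg) auto
    have "P r s - V \<le> (\<Sum>s\<in>Q - {r}. P r s - V)"
      using fin rs ge by (intro member_le_sum) auto
    also have "\<dots> \<le> (\<Sum>r\<in>Q. \<Sum>s\<in>Q - {r}. P r s - V)"
      using fin rs nonneg by (intro member_le_sum) auto
    finally show ?thesis using sum_le ge[OF rs] by linarith
  qed
  obtain T where "T \<subseteq> Q" "card T = 3" using card obtain_subset_with_card_n by metis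
  then obtain r1 r2 r3 where r: "r1 \<in> Q" "r2 \<in> Q" "r3 \<in> Q" "r1 \<noteq> r2" "r2 \<noteq> r3" "r1 \<noteq> r3"
    by (auto simp: card_3_iff)
  have "V = 0"
    using product_sum_eq_products_imp_0[of "a r1 - a r2" "g r1 - g r2" V "a r2 - a r3" "g r2 - g r3"]
      eq[of r1 r2] eq[of r2 r3] eq[of r1 r3] r by (simp add: P_def)
  then show False using V by simp
qed

lemma sum_sum_pair_products_pos:
  fixes a g :: "'a \<Rightarrow> real"
  assumes fin: "finite Q" and a: "sum a Q = 0" "k \<in> Q" "a k \<noteq> 0" and g: "sum g Q = 0" "l \<in> Q" "g l \<noteq> 0"
    and nonneg: "\<And>r s. r \<in> Q \<Longrightarrow> s \<in> Q \<Longrightarrow> 0 \<le> (a r - a s) * (g r - g s)"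
  shows "0 < (\<Sum>r\<in>Q. \<Sum>s\<in>Q. (a r - a s) * (g r - g s))"
proof -
  obtain k' where k': "k' \<in> Q" "a k' \<noteq> a k"
    using sum_eq_0_imp_nonconstant[OF fin a] by blast
  obtain l' where l': "l' \<in> Q" "g l' \<noteq> g l"
    using sum_eq_0_imp_nonconstant[OF fin g] by blast
  obtain r s where r: "r \<in> Q" and s: "s \<in> Q" and "(a r - a s) * (g r - g s) \<noteq> 0"
    using exists_pair_product_ne_0[OF k'(1) a(2) k'(2) l'(1) g(2) l'(2)] by blast
  then have "0 < (a r - a s) * (g r - g s)" using nonneg[OF r s] by linarith
  then have "0 < (\<Sum>s'\<in>Q. (a r - a s') * (g r - g s'))"
    using nonneg[OF r] by (intro sum_pos2[OF fin s]) auto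
  then show ?thesis
    by (rule sum_pos2[OF fin r]) (use nonneg in \<open>auto intro!: sum_nonneg\<close>)
qed

lemma exists_permutes_maximiser:
  fixes f :: "('a \<Rightarrow> 'a) \<Rightarrow> real"
  assumes "finite Q"
  obtains \<pi> where "\<pi> permutes Q" "\<And>\<sigma>. \<sigma> permutes Q \<Longrightarrow> f \<sigma> \<le> f \<pi>"
proof -
  let ?P = "{\<pi>. \<pi> permutes Q}"
  have finP: "finite ?P" using finite_permutations[OF assms] by simp
  moreover have "?P \<noteq> {}" using permutes_id by blast
  ultimately have "Max (f ` ?P) \<in> f ` ?P" by (intro Max_in) auto
  then obtain \<pi> where "\<pi> permutes Q" "f \<pi> = Max (f ` ?P)" by auto
  moreover have "f \<sigma> \<le> Max (f ` ?P)" if "\<sigma> permutes Q" for \<sigma>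
    using finP that by (intro Max_ge) auto
  ultimately show thesis using that by metis
qed

text \<open>Take \<open>\<pi>\<close> maximising the sum. No transposition increases it, so all products of increments
  \<open>(a r - a s) (h (\<pi> r) - h (\<pi> s))\<close> are nonnegative; they add up to \<open>2 card Q\<close> times the maximum,
  hence the maximum is positive and, as \<open>card Q \<ge> 3\<close>, some product is smaller than it.\<close>
lemma exists_perm_transpose_sum_pos:
  fixes a h :: "'a \<Rightarrow> real"
  assumes fin: "finite Q" and card: "card Q \<ge> 3"
    and a: "sum a Q = 0" "k \<in> Q" "a k \<noteq> 0" and h: "sum h Q = 0" "l \<in> Q" "h l \<noteq> 0"
  shows "\<exists>\<pi> r s. \<pi> permutes Q \<and> r \<in> Q \<and> s \<in> Q \<and> r \<noteq> s \<and>
    (\<Sum>t\<in>Q. a t * h (\<pi> t)) > 0 \<and> (\<Sum>t\<in>Q. a t * h ((\<pi> \<circ> Transposition.transpose r s) t)) > 0"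
proof -
  define V where "V \<pi> = (\<Sum>t\<in>Q. a t * h (\<pi> t))" for \<pi>
  obtain \<pi> where \<pi>: "\<pi> permutes Q" and max: "\<And>\<sigma>. \<sigma> permutes Q \<Longrightarrow> V \<sigma> \<le> V \<pi>"
    using exists_permutes_maximiser[OF fin] by blast
  define g where "g = h \<circ> \<pi>"
  have swap: "V (\<pi> \<circ> Transposition.transpose r s) = V \<pi> - (a r - a s) * (g r - g s)"
    if "r \<in> Q" "s \<in> Q" "r \<noteq> s" for r s
    using sum_mult_transpose[OF fin that, of a g] by (simp add: V_def g_def)
  have nonneg: "0 \<le> (a r - a s) * (g r - g s)" if "r \<in> Q" "s \<in> Q" for r s
  proof (cases "r = s")
    case False
    then show ?thesis
      using swap[OF that False] max[OF permutes_compose[OF permutes_swap_id[OF that] \<pi>]] by simp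
  qed simp
  have "sum g Q = 0" using sum.permute[OF \<pi>, of h] h(1) by (simp add: g_def)
  moreover obtain l' where "l' \<in> Q" "g l' \<noteq> 0"
    using h(2,3) permutes_image[OF \<pi>] by (force simp: g_def)
  ultimately have pos: "0 < (\<Sum>r\<in>Q. \<Sum>s\<in>Q. (a r - a s) * (g r - g s))"
    using sum_sum_pair_products_pos[OF fin a] nonneg by blast
  have total: "(\<Sum>r\<in>Q. \<Sum>s\<in>Q. (a r - a s) * (g r - g s)) = 2 * real (card Q) * V \<pi>"
    using \<open>sum g Q = 0\<close> by (simp add: sum_sum_pair_products V_def g_def a(1))
  then have "V \<pi> > 0" using pos by (simp add: zero_less_mult_iff)
  then obtain r s where rs: "r \<in> Q" "s \<in> Q" "r \<noteq> s" "(a r - a s) * (g r - g s) < V \<pi>"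
    using exists_pair_product_lt[OF fin card _ total] by blast
  then have "V (\<pi> \<circ> Transposition.transpose r s) > 0" using swap by simp
  then show ?thesis
    using \<open>V \<pi> > 0\<close> \<pi> rs(1-3) unfolding V_def by blast
qed

section \<open>Uniform positivity over the rotations\<close>

lemma exists_simplex_rotation_inner_pos:
  fixes Q :: "(real^'n) set"
  assumes Q: "regular_simplex_vertices Q" and n: "CARD('n) \<ge> 2" and "x \<noteq> 0" "y \<noteq> 0"
  shows "\<exists>A\<in>simplex_rotations Q. (A *v x) \<bullet> y > 0"
proof -
  note B = regular_simplexD[OF Q]
  have good: "\<exists>A\<in>simplex_rotations Q. (A *v x) \<bullet> y > 0"
    if \<rho>: "\<rho> permutes Q" "det (matrix (simplex_perm_map Q \<rho>)) = 1"
      and pos: "(\<Sum>t\<in>Q. (x \<bullet> t) * (\<rho> t \<bullet> y)) > 0" for \<rho>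
  proof
    show "matrix (simplex_perm_map Q \<rho>) \<in> simplex_rotations Q"
      using matrix_simplex_perm_map_in_simplex_rotations[OF Q \<rho>] .
    show "(matrix (simplex_perm_map Q \<rho>) *v x) \<bullet> y > 0"
      using inner_simplex_perm_map[of Q \<rho> x y] pos by (simp add: linear_simplex_perm_map)
  qed
  obtain k where k: "k \<in> Q" "x \<bullet> k \<noteq> 0"
    using regular_simplex_orthogonal_eq_0[OF Q] \<open>x \<noteq> 0\<close> by blast
  obtain l where l: "l \<in> Q" "l \<bullet> y \<noteq> 0"
    using regular_simplex_orthogonal_eq_0[OF Q] \<open>y \<noteq> 0\<close> by (metis inner_commute)
  have sums: "(\<Sum>t\<in>Q. x \<bullet> t) = 0" "(\<Sum>t\<in>Q. t \<bullet> y) = 0"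
    using regular_simplex_sum_eq_0[OF Q] by (simp_all flip: inner_sum_right inner_sum_left)
  obtain \<pi> r s where \<pi>: "\<pi> permutes Q" and rs: "r \<in> Q" "s \<in> Q" "r \<noteq> s"
    and pos: "(\<Sum>t\<in>Q. (x \<bullet> t) * (\<pi> t \<bullet> y)) > 0"
      "(\<Sum>t\<in>Q. (x \<bullet> t) * ((\<pi> \<circ> Transposition.transpose r s) t \<bullet> y)) > 0"
    using exists_perm_transpose_sum_pos[of Q "\<lambda>t. x \<bullet> t" _ "\<lambda>t. t \<bullet> y", OF B(1) _ sums(1) k sums(2) l]
      B(2) n by auto
  have \<sigma>: "\<pi> \<circ> Transposition.transpose r s permutes Q"
    using permutes_compose[OF permutes_swap_id[OF rs(1,2)] \<pi>] .
  have det_\<sigma>: "det (matrix (simplex_perm_map Q (\<pi> \<circ> Transposition.transpose r s)))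
      = - det (matrix (simplex_perm_map Q \<pi>))"
    using det_simplex_perm_map_transpose[OF Q rs]
    by (simp add: simplex_perm_map_comp[OF Q \<pi> permutes_swap_id[OF rs(1,2)]] matrix_compose
        linear_simplex_perm_map det_mul)
  have "\<bar>det (matrix (simplex_perm_map Q \<pi>))\<bar> = 1"
    using orthogonal_transformation_simplex_perm_map[OF Q \<pi>] by simp
  then consider "det (matrix (simplex_perm_map Q \<pi>)) = 1"
    | "det (matrix (simplex_perm_map Q (\<pi> \<circ> Transposition.transpose r s))) = 1"
    using det_\<sigma> by linarith
  then show ?thesis
    by cases (use good[OF \<pi> _ pos(1)] good[OF \<sigma> _ pos(2)] in blast)+
qed

lemma uniform_positive_part_bound:
  fixes G :: "(real^'n^'n) set"
  assumes "finite G" and pos: "\<And>x y. x \<noteq> 0 \<Longrightarrow> y \<noteq> 0 \<Longrightarrow> \<exists>A\<in>G. (A *v x) \<bullet> y > 0"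
  shows "\<exists>c>0. \<forall>x\<in>sphere 0 1. \<forall>y. c * norm y \<le> (\<Sum>A\<in>G. max 0 ((A *v x) \<bullet> y))"
proof -
  define F where "F xy = (\<Sum>A\<in>G. max 0 ((A *v fst xy) \<bullet> snd xy))" for xy :: "(real^'n) \<times> (real^'n)"
  let ?S = "sphere (0::real^'n) 1 \<times> sphere (0::real^'n) 1"
  obtain e :: "real^'n" where "norm e = 1" using vector_choose_size[of 1] by auto
  then have "(e, e) \<in> ?S" by simp
  then have ne: "?S \<noteq> {}" by blast
  have cont: "continuous_on ?S F"
    unfolding F_def by (intro continuous_intros continuous_on_max linear_continuous_on
      bounded_linear_compose[OF matrix_vector_mul_bounded_linear] bounded_linear_fst)
  obtain m where m: "m \<in> ?S" and min: "\<And>xy. xy \<in> ?S \<Longrightarrow> F m \<le> F xy"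
    using continuous_attains_inf[OF compact_Times[OF compact_sphere compact_sphere] ne cont] by blast
  have "F m > 0"
  proof -
    have "fst m \<noteq> 0" "snd m \<noteq> 0" using m by (auto simp: mem_Times_iff)
    then obtain A where "A \<in> G" "(A *v fst m) \<bullet> snd m > 0" using pos by blast
    then show ?thesis
      unfolding F_def using \<open>finite G\<close> by (intro sum_pos2[of G A]) auto
  qed
  moreover have "F m * norm y \<le> (\<Sum>A\<in>G. max 0 ((A *v x) \<bullet> y))" if "x \<in> sphere 0 1" for x y
  proof (cases "y = 0")
    case False
    then have "F m \<le> F (x, y /\<^sub>R norm y)" using min that by simp
    also have "F (x, y /\<^sub>R norm y) = (\<Sum>A\<in>G. max 0 ((A *v x) \<bullet> y)) / norm y"
    proof -
      have "(A *v x) \<bullet> (y /\<^sub>R norm y) = ((A *v x) \<bullet> y) / norm y" for A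
        by (simp add: divide_inverse_commute)
      moreover have "max 0 (t / norm y) = max 0 t / norm y" for t
        by (simp add: max_divide_distrib_right)
      ultimately show ?thesis by (simp add: F_def sum_divide_distrib)
    qed
    finally show ?thesis using False by (simp add: le_divide_eq)
  qed simp
  ultimately show ?thesis by blast
qed

section \<open>Integrals near a direction where the function is small\<close>

lemma sum_power_le_twice_last:
  fixes b :: real
  assumes "b \<ge> 2"
  shows "(\<Sum>k\<le>m. b ^ k) \<le> 2 * b ^ m"
proof (induction m)
  case (Suc m)
  have "(\<Sum>k\<le>Suc m. b ^ k) \<le> 2 * b ^ m + b ^ Suc m" using Suc.IH by simp
  also have "2 * b ^ m \<le> b ^ Suc m" using assms by simp
  finally show ?case by simp
qed simp

text \<open>A discrete layer-cake estimate: the weights \<open>b ^ k / 2\<close> of the layers through a point add up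
  to at most \<open>b ^ k\<close> for its top layer \<open>k\<close>, where \<open>f \<ge> b ^ k\<close>.\<close>
lemma integral_ge_sum_layers:
  fixes f :: "'a::euclidean_space \<Rightarrow> real" and S :: "nat \<Rightarrow> 'a set"
  assumes b: "b \<ge> 2" and f: "f integrable_on T" "\<And>x. x \<in> T \<Longrightarrow> 0 \<le> f x"
    and S: "\<And>k. k < K \<Longrightarrow> S k \<subseteq> T" "\<And>k. k < K \<Longrightarrow> S k \<in> lmeasurable"
    and layer: "\<And>k x. k < K \<Longrightarrow> x \<in> S k \<Longrightarrow> b ^ k \<le> f x"
  shows "(\<Sum>k<K. b ^ k / 2 * measure lebesgue (S k)) \<le> integral T f"
proof -
  define g where "g x = (\<Sum>k<K. b ^ k / 2 * indicator (S k) x)" for x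
  have "(indicator (S k) has_integral measure lebesgue (S k)) T" if "k < K" for k
  proof -
    have ST: "S k \<inter> T = S k" using S(1)[OF that] by blast
    then have "indicat_real (S k) integrable_on T" using S(2)[OF that] by (simp add: integrable_on_indicator)
    then show ?thesis
      using integral_indicator[of "S k" T] S(2)[OF that] ST by (simp add: has_integral_iff)
  qed
  then have g: "(g has_integral (\<Sum>k<K. b ^ k / 2 * measure lebesgue (S k))) T"
    unfolding g_def[abs_def] by (intro has_integral_sum has_integral_mult_right) auto
  have "g x \<le> f x" if x: "x \<in> T" for x
  proof (cases "\<exists>k<K. x \<in> S k")
    case False
    then have "g x = 0" by (simp add: g_def)
    then show ?thesis using f(2)[OF x] by simp
  next
    case True
    define k0 where "k0 = Max {k. k < K \<and> x \<in> S k}"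
    have k0: "k0 < K" "x \<in> S k0" and above: "\<And>k. k < K \<Longrightarrow> x \<in> S k \<Longrightarrow> k \<le> k0"
      using True Max_in[of "{k. k < K \<and> x \<in> S k}"] by (auto simp: k0_def)
    have "g x \<le> (\<Sum>k<K. if k \<le> k0 then b ^ k / 2 else 0)"
      unfolding g_def
    proof (rule sum_mono)
      fix k assume "k \<in> {..<K}"
      then show "b ^ k / 2 * indicator (S k) x \<le> (if k \<le> k0 then b ^ k / 2 else 0)"
        using b above[of k] by (auto simp: indicator_def)
    qed
    also have "\<dots> = (\<Sum>k\<in>{..<K} \<inter> {k. k \<le> k0}. b ^ k / 2)"
      by (simp add: sum.inter_restrict)
    also have "{..<K} \<inter> {k. k \<le> k0} = {..k0}" using k0(1) by auto
    also have "(\<Sum>k\<le>k0. b ^ k / 2) = (\<Sum>k\<le>k0. b ^ k) / 2" by (simp add: sum_divide_distrib)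
    also have "\<dots> \<le> b ^ k0" using sum_power_le_twice_last[OF b, of k0] by simp
    also have "\<dots> \<le> f x" using layer[OF k0] .
    finally show ?thesis .
  qed
  then show ?thesis
    using integral_le[OF has_integral_integrable[OF g] f(1)] integral_unique[OF g] by auto
qed

lemma norm_normalize_diff_le:
  fixes x \<theta> :: "'a::real_normed_vector"
  assumes "x \<noteq> 0" "norm \<theta> = 1" "s \<ge> 0"
  shows "norm (x /\<^sub>R norm x - \<theta>) \<le> 2 * norm (x - s *\<^sub>R \<theta>) / norm x"
proof -
  have "norm (x - norm x *\<^sub>R \<theta>) \<le> norm (x - s *\<^sub>R \<theta>) + norm (s *\<^sub>R \<theta> - norm x *\<^sub>R \<theta>)"
    by (rule norm_diff_triangle_le[of _ "s *\<^sub>R \<theta>"]) simp_all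
  also have "norm (s *\<^sub>R \<theta> - norm x *\<^sub>R \<theta>) = \<bar>norm (s *\<^sub>R \<theta>) - norm x\<bar>"
    using assms(2,3) by (simp flip: scaleR_diff_left)
  also have "\<dots> \<le> norm (x - s *\<^sub>R \<theta>)"
    by (metis norm_minus_commute norm_triangle_ineq3)
  finally have "norm (x - norm x *\<^sub>R \<theta>) \<le> 2 * norm (x - s *\<^sub>R \<theta>)" by simp
  moreover have "x /\<^sub>R norm x - \<theta> = (x - norm x *\<^sub>R \<theta>) /\<^sub>R norm x"
    using assms(1) by (simp add: algebra_simps)
  then have "norm (x /\<^sub>R norm x - \<theta>) = norm (x - norm x *\<^sub>R \<theta>) / norm x"
    by (simp add: divide_inverse mult.commute)
  ultimately show ?thesis
    by (simp add: divide_right_mono)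
qed

lemma mem_ball_on_ray:
  fixes \<theta> :: "'a::real_normed_vector"
  assumes \<theta>: "norm \<theta> = 1" and x: "x \<in> ball (c *\<^sub>R \<theta>) r" and c: "1/4 + r \<le> c" "c + r \<le> 1/2"
  shows "x \<noteq> 0" "norm x < 1/2" "norm (x /\<^sub>R norm x - \<theta>) \<le> 8 * r"
proof -
  have d: "norm (x - c *\<^sub>R \<theta>) < r" using x by (simp add: dist_norm norm_minus_commute)
  have "r > 0" using d norm_ge_zero[of "x - c *\<^sub>R \<theta>"] by linarith
  then have "c \<ge> 0" using c by linarith
  then have nc: "norm (c *\<^sub>R \<theta>) = c" using \<theta> by simp
  have "norm x \<le> norm (c *\<^sub>R \<theta>) + norm (x - c *\<^sub>R \<theta>)" by (rule norm_triangle_sub)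
  then show "norm x < 1/2" using d nc c by simp
  have "norm (c *\<^sub>R \<theta>) \<le> norm x + norm (x - c *\<^sub>R \<theta>)"
    by (metis norm_minus_commute norm_triangle_sub)
  then have "norm x \<ge> 1/4" using d nc c by simp
  then show "x \<noteq> 0" by auto
  have "norm (x /\<^sub>R norm x - \<theta>) \<le> 2 * norm (x - c *\<^sub>R \<theta>) / norm x"
    using norm_normalize_diff_le[OF \<open>x \<noteq> 0\<close> \<theta> \<open>c \<ge> 0\<close>] .
  also have "\<dots> \<le> 2 * r / (1/4)"
    using d \<open>norm x \<ge> 1/4\<close> \<open>r > 0\<close> by (intro frac_le) auto
  finally show "norm (x /\<^sub>R norm x - \<theta>) \<le> 8 * r" by simp
qed

lemma disjoint_balls_on_ray:
  fixes \<theta> :: "'a::real_normed_vector"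
  assumes "norm \<theta> = 1" "2 * r \<le> \<bar>c - c'\<bar>"
  shows "ball (c *\<^sub>R \<theta>) r \<inter> ball (c' *\<^sub>R \<theta>) r = {}"
proof (rule ccontr)
  assume "ball (c *\<^sub>R \<theta>) r \<inter> ball (c' *\<^sub>R \<theta>) r \<noteq> {}"
  then obtain x where "dist (c *\<^sub>R \<theta>) x < r" "dist (c' *\<^sub>R \<theta>) x < r" by auto
  then have "dist (c *\<^sub>R \<theta>) (c' *\<^sub>R \<theta>) < 2 * r"
    using dist_triangle[of "c *\<^sub>R \<theta>" "c' *\<^sub>R \<theta>" x] by (simp add: dist_commute)
  moreover have "dist (c *\<^sub>R \<theta>) (c' *\<^sub>R \<theta>) = \<bar>c - c'\<bar>"
    using assms(1) by (simp add: dist_norm flip: scaleR_diff_left)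
  ultimately show False using assms(2) by linarith
qed

lemma measure_disjoint_Union_balls:
  fixes z :: "'i \<Rightarrow> 'a::euclidean_space"
  assumes "finite I" "disjoint_family_on (\<lambda>i. ball (z i) r) I" "r \<ge> 0"
  shows "measure lebesgue (\<Union>i\<in>I. ball (z i) r) = real (card I) * r ^ DIM('a) * measure lebesgue (ball (0::'a) 1)"
proof -
  have "measure lebesgue (\<Union>i\<in>I. ball (z i) r) = (\<Sum>i\<in>I. measure lebesgue (ball (z i) r))"
    using assms(1,2) emeasure_lborel_ball_finite[of _ r]
    by (intro measure_finite_Union) (auto simp: less_top)
  also have "\<dots> = (\<Sum>i\<in>I. r ^ DIM('a) * measure lebesgue (ball (0::'a) 1))"
    using content_ball_conv_unit_ball[OF assms(3), where 'a='a] by (simp add: measure_completion)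
  finally show ?thesis by simp
qed

text \<open>A row of about \<open>1 / (8 r)\<close> disjoint balls of radius \<open>r\<close> centred on the ray through \<open>\<theta>\<close>.\<close>
lemma exists_set_near_direction:
  fixes \<theta> :: "'a::euclidean_space"
  assumes \<theta>: "norm \<theta> = 1" and r: "0 < r" "r \<le> 1/16"
  obtains S where "S \<in> lmeasurable" "S \<subseteq> ball 0 1" "0 \<notin> S"
    "\<And>x. x \<in> S \<Longrightarrow> norm (x /\<^sub>R norm x - \<theta>) \<le> 8 * r"
    "r ^ (DIM('a) - 1) * measure lebesgue (ball (0::'a) 1) / 16 \<le> measure lebesgue S"
proof
  define J where "J = nat \<lfloor>1 / (8 * r)\<rfloor>"
  define c where "c j = 1/4 + (2 * real j + 1) * r" for j :: nat
  define S where "S = (\<Union>j<J. ball (c j *\<^sub>R \<theta>) r)"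
  have "1 / (8 * r) \<ge> 2" using r by (simp add: field_simps)
  then have J: "real J \<le> 1 / (8 * r)" "1 / (16 * r) \<le> real J"
    unfolding J_def by linarith+
  have c: "1/4 + r \<le> c j" "c j + r \<le> 1/2" if "j < J" for j
  proof -
    have "(real j + 1) * (8 * r) \<le> real J * (8 * r)"
      using r that by (intro mult_right_mono) auto
    also have "\<dots> \<le> 1" using J(1) r by (simp add: le_divide_eq)
    finally show "c j + r \<le> 1/2" by (simp add: c_def algebra_simps)
    show "1/4 + r \<le> c j" using r by (simp add: c_def)
  qed
  have S: "x \<noteq> 0 \<and> norm x < 1/2 \<and> norm (x /\<^sub>R norm x - \<theta>) \<le> 8 * r" if "x \<in> S" for x
  proof -
    obtain j where "j < J" "x \<in> ball (c j *\<^sub>R \<theta>) r" using \<open>x \<in> S\<close> by (auto simp: S_def)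
    then show ?thesis using mem_ball_on_ray[OF \<theta> _ c] by blast
  qed
  show "S \<in> lmeasurable" unfolding S_def by (intro fmeasurable.finite_UN) auto
  show "S \<subseteq> ball 0 1" "0 \<notin> S" "\<And>x. x \<in> S \<Longrightarrow> norm (x /\<^sub>R norm x - \<theta>) \<le> 8 * r"
    using S by force+
  have "disjoint_family_on (\<lambda>j. ball (c j *\<^sub>R \<theta>) r) {..<J}"
    unfolding disjoint_family_on_def
  proof (intro ballI impI disjoint_balls_on_ray[OF \<theta>])
    fix i j :: nat assume "i \<noteq> j"
    then have "1 * (2 * r) \<le> \<bar>real i - real j\<bar> * (2 * r)"
      using r by (intro mult_right_mono) auto
    moreover have "c i - c j = (real i - real j) * (2 * r)" by (simp add: c_def algebra_simps)
    ultimately show "2 * r \<le> \<bar>c i - c j\<bar>" using r by (simp add: abs_mult)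
  qed
  then have "measure lebesgue S = real J * r ^ DIM('a) * measure lebesgue (ball (0::'a) 1)"
    unfolding S_def using r by (subst measure_disjoint_Union_balls) auto
  also have "\<dots> \<ge> 1 / (16 * r) * r ^ DIM('a) * measure lebesgue (ball (0::'a) 1)"
    using J(2) r by (intro mult_right_mono) auto
  also have "1 / (16 * r) * r ^ DIM('a) = r ^ (DIM('a) - 1) / 16"
    using r by (simp add: power_eq_if)
  finally show "r ^ (DIM('a) - 1) * measure lebesgue (ball (0::'a) 1) / 16 \<le> measure lebesgue S"
    by simp
qed

lemma inverse_power_le_powr:
  fixes t s p :: real
  assumes "0 < t" "t \<le> s" "s \<le> 1" "p \<le> - real n"
  shows "(1 / s) ^ n \<le> t powr p"
proof -
  have "(1 / s) ^ n = s powr (- real n)"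
    using assms by (simp add: powr_minus powr_realpow divide_inverse power_inverse)
  also have "\<dots> \<le> s powr p" using assms by (intro powr_mono') auto
  also have "\<dots> \<le> t powr p" using assms by (intro powr_mono2') auto
  finally show ?thesis .
qed

lemma power_mult_half_power_div: "(2 ^ n) ^ k * ((1/2) ^ k / D) ^ n = 1 / (D::real) ^ n"
proof -
  have "(2 ^ n) ^ k * ((1/2) ^ k / D) ^ n = (2 ^ k * (1/2) ^ k) ^ n / D ^ n"
    by (simp add: power_divide power_mult_distrib flip: power_mult) (simp add: mult.commute)
  then show ?thesis by (simp flip: power_mult_distrib)
qed

lemma exists_set_where_powr_ge:
  fixes u :: "'a::euclidean_space \<Rightarrow> real"
  assumes u: "\<And>x. x \<in> sphere 0 1 \<Longrightarrow> 0 < u x" "L-lipschitz_on (sphere 0 1) u" and L: "L \<ge> 0"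
    and \<theta>: "\<theta> \<in> sphere 0 1" and p: "p \<le> - real n"
    and small: "u \<theta> \<le> (1/2) ^ k / (16 + 8 * L)"
  obtains S where "S \<in> lmeasurable" "S \<subseteq> ball 0 1"
    "\<And>x. x \<in> S \<Longrightarrow> (2 ^ n) ^ k \<le> u (x /\<^sub>R norm x) powr p"
    "((1/2) ^ k / (16 + 8 * L)) ^ (DIM('a) - 1) * measure lebesgue (ball (0::'a) 1) / 16
      \<le> measure lebesgue S"
proof -
  define r where "r = (1/2) ^ k / (16 + 8 * L)"
  have "(1/2::real) ^ k \<le> 1" by (simp add: power_le_one)
  then have r: "0 < r" "r \<le> 1/16" using L by (simp_all add: r_def frac_le)
  obtain S where S: "S \<in> lmeasurable" "S \<subseteq> ball 0 1" "0 \<notin> S"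
    "\<And>x. x \<in> S \<Longrightarrow> norm (x /\<^sub>R norm x - \<theta>) \<le> 8 * r"
    "r ^ (DIM('a) - 1) * measure lebesgue (ball (0::'a) 1) / 16 \<le> measure lebesgue S"
    using exists_set_near_direction[of \<theta> r] \<theta> r by auto
  have "(2 ^ n) ^ k \<le> u (x /\<^sub>R norm x) powr p" if "x \<in> S" for x
  proof -
    have "x \<noteq> 0" using S(3) that by auto
    then have x: "x /\<^sub>R norm x \<in> sphere 0 1" by simp
    have "u (x /\<^sub>R norm x) \<le> u \<theta> + L * norm (x /\<^sub>R norm x - \<theta>)"
      using lipschitz_onD[OF u(2) x \<theta>] by (simp add: dist_real_def dist_norm)
    also have "\<dots> \<le> r + L * (8 * r)"
      using small S(4) that L by (intro add_mono mult_left_mono) (auto simp: r_def)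
    also have "\<dots> \<le> (16 + 8 * L) * r" using r(1) by (simp add: algebra_simps)
    also have "\<dots> = (1/2) ^ k" using L by (simp add: r_def)
    finally have "(1 / (1/2) ^ k) ^ n \<le> u (x /\<^sub>R norm x) powr p"
      using u(1)[OF x] p by (intro inverse_power_le_powr) (auto simp: power_le_one)
    then show ?thesis by (simp add: power_mult[symmetric] mult.commute power_one_over)
  qed
  with S show thesis using that unfolding r_def by blast
qed

text \<open>If \<open>u \<theta> \<le> 2 ^ -K / D\<close>, then at every scale \<open>k < K\<close> \<open>exists_set_where_powr_ge\<close> gives a set on
  which \<open>u powr p \<ge> 2 ^ (k n)\<close> whose weighted measure in the layer-cake estimate is
  \<open>\<bar>B\<bar> / (32 D ^ n)\<close>; since \<open>K > 32 D ^ n\<close> these add up to more than \<open>\<bar>B\<bar>\<close>.\<close>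
lemma measure_ball_lt_integral_powr:
  fixes u :: "'a::euclidean_space \<Rightarrow> real" and L :: real
  defines "D \<equiv> 16 + 8 * L"
  defines "K \<equiv> nat \<lceil>32 * D ^ (DIM('a) - 1)\<rceil> + 1"
  assumes dim: "DIM('a) \<ge> 2" and L: "L \<ge> 0" and p: "p \<le> - (real DIM('a) - 1)"
    and u: "\<And>x. x \<in> sphere 0 1 \<Longrightarrow> 0 < u x" "L-lipschitz_on (sphere 0 1) u"
    and f: "(\<lambda>x. u (x /\<^sub>R norm x) powr p) integrable_on ball 0 1"
    and \<theta>: "\<theta> \<in> sphere 0 1" and small: "u \<theta> \<le> (1/2) ^ K / D"
  shows "measure lebesgue (ball (0::'a) 1) < integral (ball 0 1) (\<lambda>x. u (x /\<^sub>R norm x) powr p)"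
proof -
  define n where "n = DIM('a) - 1"
  have n: "n \<ge> 1" "p \<le> - real n" using dim p by (auto simp: n_def of_nat_diff)
  define \<omega> where "\<omega> = measure lebesgue (ball (0::'a) 1)"
  have \<omega>: "\<omega> > 0"
    using content_ball_pos[of 1 "0::'a"] by (simp add: \<omega>_def measure_completion)
  have D: "D > 0" using L by (simp add: D_def)
  have "u \<theta> \<le> (1/2) ^ k / D" if "k < K" for k
  proof -
    have "(1/2::real) ^ K \<le> (1/2) ^ k" using that by (intro power_decreasing) auto
    then show ?thesis using small D by (smt (verit) divide_right_mono)
  qed
  then have "\<forall>k\<in>{..<K}. \<exists>S. S \<in> lmeasurable \<and> S \<subseteq> ball 0 1 \<and>
      (\<forall>x\<in>S. (2 ^ n) ^ k \<le> u (x /\<^sub>R norm x) powr p) \<and>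
      ((1/2) ^ k / D) ^ n * \<omega> / 16 \<le> measure lebesgue S"
    using exists_set_where_powr_ge[OF u L \<theta> n(2)] unfolding D_def \<omega>_def n_def by (metis lessThan_iff)
  then obtain S where S: "\<And>k. k < K \<Longrightarrow> S k \<in> lmeasurable" "\<And>k. k < K \<Longrightarrow> S k \<subseteq> ball 0 1"
      "\<And>k x. k < K \<Longrightarrow> x \<in> S k \<Longrightarrow> (2 ^ n) ^ k \<le> u (x /\<^sub>R norm x) powr p"
      "\<And>k. k < K \<Longrightarrow> ((1/2) ^ k / D) ^ n * \<omega> / 16 \<le> measure lebesgue (S k)"
    by (metis lessThan_iff bchoice)
  have "\<omega> / (32 * D ^ n) \<le> (2 ^ n) ^ k / 2 * measure lebesgue (S k)" if "k < K" for k
  proof -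
    have "(2 ^ n) ^ k / 2 * (((1/2) ^ k / D) ^ n * \<omega> / 16)
        = ((2 ^ n) ^ k * ((1/2) ^ k / D) ^ n) * \<omega> / 32" by simp
    also have "\<dots> = \<omega> / (32 * D ^ n)" by (simp add: power_mult_half_power_div)
    finally show ?thesis using S(4)[OF that] by (metis mult_left_mono zero_le_divide_iff zero_le_numeral
          zero_le_power)
  qed
  then have "real K * (\<omega> / (32 * D ^ n)) \<le> (\<Sum>k<K. (2 ^ n) ^ k / 2 * measure lebesgue (S k))"
    using sum_mono[of "{..<K}" "\<lambda>_. \<omega> / (32 * D ^ n)"] by simp
  also have "\<dots> \<le> integral (ball 0 1) (\<lambda>x. u (x /\<^sub>R norm x) powr p)"
    using n(1) by (intro integral_ge_sum_layers[OF _ f _ S(2,1,3)]) (auto simp: self_le_power)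
  moreover have "\<omega> < real K * (\<omega> / (32 * D ^ n))"
  proof -
    have "32 * D ^ n < real K" unfolding K_def n_def by linarith
    then have "1 < real K / (32 * D ^ n)" using D by simp
    from mult_strict_right_mono[OF this \<omega>] show ?thesis by simp
  qed
  ultimately show ?thesis by (simp add: \<omega>_def)
qed

lemma uniform_lower_bound:
  fixes L p :: real
  assumes dim: "DIM('a::euclidean_space) \<ge> 2" and L: "L \<ge> 0" and p: "p \<le> - (real DIM('a) - 1)"
  obtains \<epsilon> :: real where "\<epsilon> > 0"
    "\<And>u \<theta>. (\<And>x. x \<in> sphere 0 1 \<Longrightarrow> 0 < u x) \<Longrightarrow> L-lipschitz_on (sphere (0::'a) 1) u \<Longrightarrow>
      (\<lambda>x. u (x /\<^sub>R norm x) powr p) integrable_on ball 0 1 \<Longrightarrow>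
      integral (ball 0 1) (\<lambda>x. u (x /\<^sub>R norm x) powr p) = measure lebesgue (ball (0::'a) 1) \<Longrightarrow>
      \<theta> \<in> sphere 0 1 \<Longrightarrow> \<epsilon> \<le> u \<theta>"
proof
  define D where "D = 16 + 8 * L"
  define K where "K = nat \<lceil>32 * D ^ (DIM('a) - 1)\<rceil> + 1"
  show "(1/2) ^ K / D > 0" using L by (simp add: D_def)
  fix u :: "'a \<Rightarrow> real" and \<theta> :: 'a
  assume "\<And>x. x \<in> sphere 0 1 \<Longrightarrow> 0 < u x" "L-lipschitz_on (sphere 0 1) u"
    "(\<lambda>x. u (x /\<^sub>R norm x) powr p) integrable_on ball 0 1"
    "integral (ball 0 1) (\<lambda>x. u (x /\<^sub>R norm x) powr p) = measure lebesgue (ball (0::'a) 1)"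
    "\<theta> \<in> sphere 0 1"
  then show "(1/2) ^ K / D \<le> u \<theta>"
    using measure_ball_lt_integral_powr[OF dim L p, of u \<theta>] unfolding D_def K_def by force
qed

section \<open>Support functions in the class B\<close>

lemma exists_sphere_le_1:
  fixes u :: "'a::euclidean_space \<Rightarrow> real"
  assumes p: "p < 0" and u: "\<And>x. x \<in> sphere 0 1 \<Longrightarrow> 0 < u x" "continuous_on (sphere 0 1) u"
    and f: "(\<lambda>x. u (x /\<^sub>R norm x) powr p) integrable_on ball 0 1"
      "integral (ball 0 1) (\<lambda>x. u (x /\<^sub>R norm x) powr p) = measure lebesgue (ball (0::'a) 1)"
  shows "\<exists>x\<in>sphere 0 1. u x \<le> 1"
proof (rule ccontr)
  assume "\<not> ?thesis"
  then have gt: "\<And>x. x \<in> sphere 0 1 \<Longrightarrow> 1 < u x" by force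
  obtain e :: 'a where "norm e = 1" using vector_choose_size[of 1] by auto
  then have "sphere (0::'a) 1 \<noteq> {}" by auto
  then obtain x0 where x0: "x0 \<in> sphere 0 1" and min: "\<And>x. x \<in> sphere 0 1 \<Longrightarrow> u x0 \<le> u x"
    using continuous_attains_inf[OF compact_sphere _ u(2)] by blast
  define \<omega> where "\<omega> = measure lebesgue (ball (0::'a) 1)"
  have "\<omega> > 0"
    unfolding \<omega>_def using content_ball_pos[of 1 "0::'a"] by (simp add: measure_completion)
  have "integral (ball (0::'a) 1) (\<lambda>x. 1) = \<omega>"
    unfolding \<omega>_def by (rule lmeasure_integral[symmetric]) simp
  moreover have "integral (ball (0::'a) 1) (\<lambda>x. c *\<^sub>R 1) = c *\<^sub>R integral (ball (0::'a) 1) (\<lambda>x. 1::real)"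
    for c by (rule integral_cmul)
  ultimately have \<omega>: "\<omega> > 0" "integral (ball (0::'a) 1) (\<lambda>x. c) = c * \<omega>" for c
    using \<open>\<omega> > 0\<close> by simp_all
  \<comment> \<open>the integrand is bounded by \<open>u x0 powr p < 1\<close> off the origin, where it is junk\<close>
  define g where "g x = (if x = 0 then 0 else u (x /\<^sub>R norm x) powr p)" for x :: 'a
  have "\<omega> = integral (ball 0 1) g"
    using f(2) by (subst integral_spike[of "{0}"]) (auto simp: g_def \<omega>_def)
  also have "\<dots> \<le> integral (ball (0::'a) 1) (\<lambda>x. u x0 powr p)"
  proof (rule integral_le)
    show "g integrable_on ball 0 1"
      using f(1) by (rule integrable_spike[of _ _ "{0}"]) (auto simp: g_def)
    show "g x \<le> u x0 powr p" if "x \<in> ball 0 1" for x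
      using min[of "x /\<^sub>R norm x"] u(1)[OF x0] p by (auto simp: g_def intro: powr_mono2')
  qed (simp add: integrable_on_const)
  also have "\<dots> = u x0 powr p * \<omega>" by (rule \<omega>(2))
  also have "\<dots> < \<omega>" using \<omega>(1) powr_less_one[OF gt[OF x0] p] by simp
  finally show False by simp
qed

lemma inner_le_support_fun:
  fixes K :: "(real^'n) set"
  assumes "\<And>y. y \<in> K \<Longrightarrow> norm y \<le> R" "y \<in> K"
  shows "x \<bullet> y \<le> support_fun K x"
proof -
  have "bdd_above ((\<lambda>y. x \<bullet> y) ` K)"
  proof (rule bdd_aboveI2)
    fix y assume "y \<in> K"
    have "x \<bullet> y \<le> norm x * norm y" by (rule norm_cauchy_schwarz)
    also have "\<dots> \<le> norm x * R" using assms(1)[OF \<open>y \<in> K\<close>] by (simp add: mult_left_mono)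
    finally show "x \<bullet> y \<le> norm x * R" .
  qed
  then show ?thesis unfolding support_fun_def using assms(2) by (rule cSUP_upper2) simp
qed

lemma support_fun_le:
  fixes K :: "(real^'n) set"
  assumes "K \<noteq> {}" "\<And>y. y \<in> K \<Longrightarrow> norm y \<le> R"
  shows "support_fun K x \<le> R * norm x"
  unfolding support_fun_def
proof (rule cSUP_least[OF assms(1)])
  fix y assume "y \<in> K"
  have "x \<bullet> y \<le> norm x * norm y" by (rule norm_cauchy_schwarz)
  also have "\<dots> = norm y * norm x" by (rule mult.commute)
  also have "\<dots> \<le> R * norm x" using assms(2)[OF \<open>y \<in> K\<close>] by (simp add: mult_right_mono)
  finally show "x \<bullet> y \<le> R * norm x" .
qed

lemma lipschitz_support_fun:
  fixes K :: "(real^'n) set"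
  assumes K: "K \<noteq> {}" "\<And>y. y \<in> K \<Longrightarrow> norm y \<le> R"
  shows "R-lipschitz_on UNIV (support_fun K)"
proof (rule lipschitz_onI)
  have le: "support_fun K x \<le> support_fun K z + R * dist x z" for x z
    unfolding support_fun_def
  proof (rule cSUP_least[OF K(1)])
    fix y assume y: "y \<in> K"
    have "x \<bullet> y = z \<bullet> y + (x - z) \<bullet> y" by (simp add: inner_diff_left)
    also have "(x - z) \<bullet> y \<le> norm (x - z) * norm y" by (rule norm_cauchy_schwarz)
    also have "\<dots> \<le> norm (x - z) * R" using K(2)[OF y] by (simp add: mult_left_mono)
    also have "z \<bullet> y \<le> (SUP y\<in>K. z \<bullet> y)"
      using inner_le_support_fun[OF K(2) y] by (simp add: support_fun_def)
    finally show "x \<bullet> y \<le> (SUP y\<in>K. z \<bullet> y) + R * dist x z" by (simp add: dist_norm mult.commute)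
  qed
  show "dist (support_fun K x) (support_fun K z) \<le> R * dist x z" for x z
    using le[of x z] le[of z x] by (simp add: dist_real_def dist_commute abs_le_iff)
  obtain y where "y \<in> K" using K(1) by blast
  then show "0 \<le> R" using K(2)[of y] norm_ge_zero[of y] by linarith
qed

lemma Hstar_plus_support:
  assumes "u \<in> Hstar_plus"
  shows "\<exists>K (y0 :: real^'n). y0 \<in> K \<and> (\<forall>y\<in>K. norm y \<le> norm y0) \<and>
    (\<forall>x\<in>sphere 0 1. u x = support_fun K x \<and> 0 < u x)"
proof -
  obtain K where K: "compact K" "interior K \<noteq> {}"
    and u: "\<forall>x\<in>sphere 0 1. u x = support_fun K x \<and> 0 < u x"
    using assms unfolding Hstar_plus_def by blast
  have "K \<noteq> {}" using K(2) interior_subset by blast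
  then obtain y0 where "y0 \<in> K" "\<forall>y\<in>K. norm y \<le> norm y0"
    using continuous_attains_sup[OF K(1) _ continuous_on_norm_id] by blast
  then show ?thesis using u by blast
qed

lemma norm_simplex_rotation:
  assumes "A \<in> simplex_rotations Q"
  shows "norm (A *v x) = norm x"
proof -
  have "orthogonal_transformation (\<lambda>x. A *v x)"
    using assms by (simp add: simplex_rotations_def rotation_matrix_def orthogonal_transformation_matrix)
  then show ?thesis unfolding orthogonal_transformation by blast
qed

lemma lip_norm_le:
  fixes u :: "real^'n \<Rightarrow> real"
  assumes "L-lipschitz_on (sphere 0 1) u" "\<And>x. x \<in> sphere 0 1 \<Longrightarrow> \<bar>u x\<bar> \<le> M"
  shows "lip_norm u \<le> ereal (M + L)"
proof -
  have sup: "(SUP x\<in>sphere (0::real^'n) 1. ereal \<bar>u x\<bar>) \<le> ereal M"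
    using assms(2) by (intro SUP_least) simp
  have lip: "(SUP xy\<in>{(x, y). x \<in> sphere (0::real^'n) 1 \<and> y \<in> sphere 0 1 \<and> x \<noteq> y}.
      ereal (\<bar>u (fst xy) - u (snd xy)\<bar> / dist (fst xy) (snd xy))) \<le> ereal L"
  proof (rule SUP_least)
    fix xy assume "xy \<in> {(x, y). x \<in> sphere (0::real^'n) 1 \<and> y \<in> sphere 0 1 \<and> x \<noteq> y}"
    then obtain x y where xy: "xy = (x, y)" "x \<in> sphere 0 1" "y \<in> sphere 0 1" "x \<noteq> y" by auto
    then have "\<bar>u x - u y\<bar> / dist x y \<le> L"
      using lipschitz_onD[OF assms(1) xy(2,3)] by (simp add: dist_real_def divide_le_eq)
    then show "ereal (\<bar>u (fst xy) - u (snd xy)\<bar> / dist (fst xy) (snd xy)) \<le> ereal L"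
      using xy(1) by simp
  qed
  have "lip_norm u \<le> ereal M + ereal L"
    unfolding lip_norm_def using sup lip by (rule add_mono)
  then show ?thesis by simp
qed

lemma class_BD:
  fixes u :: "real^'n \<Rightarrow> real"
  assumes "u \<in> class_B Q p"
  shows "u \<in> Hstar_plus" "symmetric_wrt Q u"
    "(\<lambda>x. u (x /\<^sub>R norm x) powr p) integrable_on ball 0 1"
    "integral (ball 0 1) (\<lambda>x. u (x /\<^sub>R norm x) powr p) = measure lebesgue (ball (0::real^'n) 1)"
proof -
  show "u \<in> Hstar_plus" "symmetric_wrt Q u" using assms by (simp_all add: class_B_def)
  have "integral (ball 0 1) (\<lambda>x::real^'n. 1) = measure lebesgue (ball (0::real^'n) 1)"
    by (rule lmeasure_integral[symmetric]) simp
  then show I: "integral (ball 0 1) (\<lambda>x. u (x /\<^sub>R norm x) powr p) = measure lebesgue (ball (0::real^'n) 1)"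
    using assms by (simp add: class_B_def sphere_integral_def sphere_area_def)
  moreover have "measure lebesgue (ball (0::real^'n) 1) > 0"
    using content_ball_pos[of 1 "0::real^'n"] by (simp add: measure_completion)
  ultimately show "(\<lambda>x. u (x /\<^sub>R norm x) powr p) integrable_on ball 0 1"
    using not_integrable_integral by fastforce
qed

text \<open>Testing the support function at the rotated images of a point \<open>x0\<close> with \<open>u x0 \<le> 1\<close>
  bounds every point of the body.\<close>
lemma symmetric_support_norm_bound:
  fixes G :: "(real^'n^'n) set" and y :: "real^'n"
  assumes c: "\<And>x y. x \<in> sphere 0 1 \<Longrightarrow> c * norm y \<le> (\<Sum>A\<in>G. max 0 ((A *v x) \<bullet> y))"
    and G: "\<And>A x. A \<in> G \<Longrightarrow> x \<in> sphere 0 1 \<Longrightarrow> A *v x \<in> sphere 0 1 \<and> u (A *v x) = u x"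
    and x0: "x0 \<in> sphere 0 1" "u x0 \<le> 1"
    and y: "\<And>x. x \<in> sphere 0 1 \<Longrightarrow> x \<bullet> y \<le> u x"
  shows "c * norm y \<le> card G"
proof -
  have "c * norm y \<le> (\<Sum>A\<in>G. max 0 ((A *v x0) \<bullet> y))" using c x0(1) .
  also have "\<dots> \<le> (\<Sum>A\<in>G. 1)"
  proof (rule sum_mono)
    fix A assume "A \<in> G"
    then show "max 0 ((A *v x0) \<bullet> y) \<le> 1"
      using y[of "A *v x0"] G[of A x0] x0 by simp
  qed
  finally show ?thesis by simp
qed

lemma class_B_lipschitz:
  fixes Q :: "(real^'n) set"
  assumes p: "p < 0" and u: "u \<in> class_B Q p" and c: "c > 0"
    "\<And>x y. x \<in> sphere 0 1 \<Longrightarrow> c * norm y \<le> (\<Sum>A\<in>simplex_rotations Q. max 0 ((A *v x) \<bullet> y))"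
  defines "L \<equiv> card (simplex_rotations Q) / c"
  shows "L-lipschitz_on (sphere 0 1) u" "\<And>x. x \<in> sphere 0 1 \<Longrightarrow> 0 < u x \<and> u x \<le> L"
proof -
  obtain K y0 where y0: "y0 \<in> K" "\<And>y. y \<in> K \<Longrightarrow> norm y \<le> norm y0"
    and uK: "\<And>x. x \<in> sphere 0 1 \<Longrightarrow> u x = support_fun K x \<and> 0 < u x"
    using Hstar_plus_support[OF class_BD(1)[OF u]] by blast
  have "K \<noteq> {}" using y0(1) by blast
  note lipK = lipschitz_support_fun[OF this y0(2)]
  have lip: "(norm y0)-lipschitz_on (sphere 0 1) u"
  proof (rule lipschitz_onI)
    show "dist (u x) (u z) \<le> norm y0 * dist x z" if "x \<in> sphere 0 1" "z \<in> sphere 0 1" for x z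
      using lipschitz_onD[OF lipK, of x z] uK[OF that(1)] uK[OF that(2)] by simp
  qed simp
  have upos: "\<And>x. x \<in> sphere 0 1 \<Longrightarrow> 0 < u x" using uK by blast
  obtain x0 where x0: "x0 \<in> sphere 0 1" "u x0 \<le> 1"
    using exists_sphere_le_1[OF p upos lipschitz_on_continuous_on[OF lip] class_BD(3,4)[OF u]] by blast
  have "c * norm y0 \<le> card (simplex_rotations Q)"
  proof (rule symmetric_support_norm_bound[where u = u and y = y0, OF c(2) _ x0])
    show "A *v x \<in> sphere 0 1 \<and> u (A *v x) = u x" if "A \<in> simplex_rotations Q" "x \<in> sphere 0 1" for A x
      using that class_BD(2)[OF u] norm_simplex_rotation[OF that(1)] by (simp add: symmetric_wrt_def)
    show "x \<bullet> y0 \<le> u x" if "x \<in> sphere 0 1" for x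
      using inner_le_support_fun[OF y0(2,1)] uK[OF that] by simp
  qed
  then have "norm y0 \<le> L" using c(1) by (simp add: L_def field_simps)
  then show "L-lipschitz_on (sphere 0 1) u" by (rule lipschitz_on_le[OF lip])
  show "0 < u x \<and> u x \<le> L" if "x \<in> sphere 0 1" for x
    using support_fun_le[OF \<open>K \<noteq> {}\<close> y0(2), of x] uK[OF that] that \<open>norm y0 \<le> L\<close> by simp
qed

lemma class_B_bounds:
  fixes Q :: "(real^'n) set"
  assumes n: "CARD('n) \<ge> 2" and Q: "regular_simplex_vertices Q" and p: "p \<le> - (real CARD('n) - 1)"
  shows "\<exists>\<epsilon>>0. \<exists>L. \<forall>u\<in>class_B Q p.
    L-lipschitz_on (sphere 0 1) u \<and> (\<forall>x\<in>sphere 0 1. \<epsilon> \<le> u x \<and> u x \<le> L)"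
proof -
  obtain c where c: "c > 0"
    "\<And>x y. x \<in> sphere 0 1 \<Longrightarrow> c * norm y \<le> (\<Sum>A\<in>simplex_rotations Q. max 0 ((A *v x) \<bullet> y))"
    using uniform_positive_part_bound[OF finite_simplex_rotations[OF Q]
        exists_simplex_rotation_inner_pos[OF Q n]] by blast
  define L where "L = card (simplex_rotations Q) / c"
  have "p < 0" using n p by simp
  note B = class_B_lipschitz[OF this _ c, folded L_def]
  obtain \<epsilon> where "\<epsilon> > 0"
    and \<epsilon>: "\<And>u \<theta>. (\<And>x. x \<in> sphere 0 1 \<Longrightarrow> 0 < u x) \<Longrightarrow> L-lipschitz_on (sphere (0::real^'n) 1) u \<Longrightarrow>
      (\<lambda>x. u (x /\<^sub>R norm x) powr p) integrable_on ball 0 1 \<Longrightarrow>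
      integral (ball 0 1) (\<lambda>x. u (x /\<^sub>R norm x) powr p) = measure lebesgue (ball (0::real^'n) 1) \<Longrightarrow>
      \<theta> \<in> sphere 0 1 \<Longrightarrow> \<epsilon> \<le> u \<theta>"
    by (rule uniform_lower_bound[where 'a="real^'n", of L p]) (use n p c(1) in \<open>auto simp: L_def\<close>)
  have "L-lipschitz_on (sphere 0 1) u \<and> (\<forall>x\<in>sphere 0 1. \<epsilon> \<le> u x \<and> u x \<le> L)"
    if u: "u \<in> class_B Q p" for u
    using B[OF u] \<epsilon>[OF _ B(1)[OF u] class_BD(3,4)[OF u]] by blast
  with \<open>\<epsilon> > 0\<close> show ?thesis by blast
qed

theorem proposition5p1:
  fixes Q :: "(real^'n) set" and p :: real
  assumes "CARD('n) \<ge> 2"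
    and "regular_simplex_vertices Q"
    and "p \<le> - (real CARD('n) - 1)"
  shows "\<exists>C>0. \<forall>u\<in>class_B Q p.
           lip_norm u \<le> ereal C \<and> (\<forall>x\<in>sphere 0 1. u x \<ge> 1 / C)"
proof -
  obtain \<epsilon> L where "\<epsilon> > 0" and bounds: "\<And>u. u \<in> class_B Q p \<Longrightarrow>
      L-lipschitz_on (sphere 0 1) u \<and> (\<forall>x\<in>sphere 0 1. \<epsilon> \<le> u x \<and> u x \<le> L)"
    using class_B_bounds[OF assms] by blast
  define C where "C = max (2 * L) (1 / \<epsilon>)"
  have "C > 0" using \<open>\<epsilon> > 0\<close> by (simp add: C_def less_max_iff_disj)
  have "1 / \<epsilon> \<le> C" by (simp add: C_def)
  then have "1 / C \<le> \<epsilon>" using \<open>\<epsilon> > 0\<close> \<open>C > 0\<close> by (simp add: divide_le_eq mult.commute)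
  have "lip_norm u \<le> ereal C \<and> (\<forall>x\<in>sphere 0 1. 1 / C \<le> u x)" if "u \<in> class_B Q p" for u
  proof
    have lip: "L-lipschitz_on (sphere 0 1) u" and u: "\<And>x. x \<in> sphere 0 1 \<Longrightarrow> \<epsilon> \<le> u x \<and> u x \<le> L"
      using bounds[OF that] by auto
    have "\<bar>u x\<bar> \<le> L" if "x \<in> sphere 0 1" for x
      using u[OF that] \<open>\<epsilon> > 0\<close> by linarith
    then have "lip_norm u \<le> ereal (L + L)" by (rule lip_norm_le[OF lip])
    also have "\<dots> \<le> ereal C" by (simp add: C_def)
    finally show "lip_norm u \<le> ereal C" .
    show "\<forall>x\<in>sphere 0 1. 1 / C \<le> u x" using u \<open>1 / C \<le> \<epsilon>\<close> by (meson order_trans)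
  qed
  with \<open>C > 0\<close> show ?thesis by blast
qed

end
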